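(* Let $n\ge2$, $k\ge1$, and let $L_1,\dots,L_n$ be commuting indeterminates over $\mathbb{K}=\mathbb{C}(q)$. Let $G_{n,k}=\sum_{i=1}^n L_i^k\prod_{j\ne i}\frac{qL_i-q^{-1}L_j}{L_i-L_j}$. For $1\le i\le\min(k,n)$ let $\Gamma_{k,i}=s_{(k-i+1,1^{i-1})}(L_1,\dots,L_n)$ be the Schur polynomial of the hook partition $(k-i+1,1^{i-1})$, i.e. the character of the irreducible $\mathfrak{gl}_n$-module of highest weight $(k-i+1)\epsilon_1+\epsilon_2+\cdots+\epsilon_i$ with $e^{\epsilon_j}$ replaced by $L_j$; set $\Gamma_{k,i}=0$ if $i>k$. Then $G_{n,k}=\sum_{i=1}^n(-1)^{i-1}q^{n-2i+1}\Gamma_{k,i}$.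
   Context: In the paper $L_i=q^{n-2i+1}K_i^2$ are elements of the commutative subalgebra of $\mathrm{U}_q(\mathfrak{gl}_n)$ generated by the $K_i^{\pm1}$, in which they are algebraically independent. *)

theory Defs
  imports Main
begin

text \<open>Young diagram of a partition given as a list of (weakly decreasing) row lengths;
  cells are (row, column) pairs, 0-indexed.\<close>
definition young_cells :: "nat list \<Rightarrow> (nat \<times> nat) set" where
  "young_cells lam = {(r, c). r < length lam \<and> c < lam ! r}"

definition ssyt :: "nat \<Rightarrow> nat list \<Rightarrow> ((nat \<times> nat) \<Rightarrow> nat) set" where
  "ssyt n lam = {T.
     (\<forall>x\<in>young_cells lam. T x < n) \<and>
     (\<forall>x. x \<notin> young_cells lam \<longrightarrow> T x = 0) \<and>
     (\<forall>r c. (r, Suc c) \<in> young_cells lam \<longrightarrow> T (r, c) \<le> T (r, Suc c)) \<and>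
     (\<forall>r c. (Suc r, c) \<in> young_cells lam \<longrightarrow> T (r, c) < T (Suc r, c))}"

definition schur :: "nat \<Rightarrow> nat list \<Rightarrow> (nat \<Rightarrow> 'a::comm_ring_1) \<Rightarrow> 'a" where
  "schur n lam L = (\<Sum>T\<in>ssyt n lam. \<Prod>x\<in>young_cells lam. L (T x))"

definition hook :: "nat \<Rightarrow> nat \<Rightarrow> nat list" where
  "hook a b = a # replicate b 1"

definition Gamma :: "nat \<Rightarrow> nat \<Rightarrow> nat \<Rightarrow> (nat \<Rightarrow> 'a::comm_ring_1) \<Rightarrow> 'a" where
  "Gamma n k i L = (if i > k then 0 else schur n (hook (k - i + 1) (i - 1)) L)"

definition Gnk :: "nat \<Rightarrow> nat \<Rightarrow> 'a::field \<Rightarrow> (nat \<Rightarrow> 'a) \<Rightarrow> 'a" where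
  "Gnk n k q L = (\<Sum>i<n. L i ^ k *
      (\<Prod>j\<in>{..<n} - {i}. (q * L i - inverse q * L j) / (L i - L j)))"

end

theory Submission
  imports Defs
begin

(* Expanding each product over j ~= i of (q L_i - q^-1 L_j) in the elementary symmetric functions
   of the remaining variables, and these in turn as e_d(L) times powers of L_i, reduces G_{n,k} to
   the divided power sums sum_i L_i^m / prod_{j ~= i} (L_i - L_j), which equal the complete
   symmetric functions h_{m-n+1} (Lagrange interpolation). The coefficient of q^{n-2b-1} thus
   becomes sum_d (-1)^{b-d} e_d h_{k-d}, which telescopes by the Pieri rule
   e_{b+1} h_a = s_{(a+1,1^b)} + s_{(a,1^{b+1})} to the hook Schur function s_{(k-b,1^b)}. *)

definition weak_lists :: "nat \<Rightarrow> nat \<Rightarrow> nat \<Rightarrow> nat list set" where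
  "weak_lists lo n m = {xs. length xs = m \<and> sorted xs \<and> set xs \<subseteq> {lo..<n}}"

definition strict_lists :: "nat \<Rightarrow> nat \<Rightarrow> nat \<Rightarrow> nat list set" where
  "strict_lists lo n m = {xs. length xs = m \<and> sorted_wrt (<) xs \<and> set xs \<subseteq> {lo..<n}}"

definition complete_sym :: "(nat \<Rightarrow> 'a::comm_ring_1) \<Rightarrow> nat \<Rightarrow> nat \<Rightarrow> nat \<Rightarrow> 'a" where
  "complete_sym L lo n m = (\<Sum>xs\<in>weak_lists lo n m. prod_list (map L xs))"

definition elem_sym :: "(nat \<Rightarrow> 'a::comm_ring_1) \<Rightarrow> nat set \<Rightarrow> nat \<Rightarrow> 'a" where
  "elem_sym L S m = (\<Sum>T | T \<subseteq> S \<and> card T = m. prod L T)"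

lemma finite_weak_lists: "finite (weak_lists lo n m)"
  by (rule finite_subset[OF _ finite_lists_length_eq[of "{lo..<n}" m]]) (auto simp: weak_lists_def)

lemma finite_strict_lists: "finite (strict_lists lo n m)"
  by (rule finite_subset[OF _ finite_lists_length_eq[of "{lo..<n}" m]]) (auto simp: strict_lists_def)

lemma complete_sym_0 [simp]: "complete_sym L lo n 0 = 1"
proof -
  have "weak_lists lo n 0 = {[]}" by (auto simp: weak_lists_def)
  then show ?thesis by (simp add: complete_sym_def)
qed

lemma complete_sym_empty: "n \<le> lo \<Longrightarrow> complete_sym L lo n (Suc m) = 0"
proof -
  assume "n \<le> lo"
  then have "weak_lists lo n (Suc m) = {}" by (auto simp: weak_lists_def length_Suc_conv)
  then show ?thesis by (simp add: complete_sym_def)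
qed

lemma weak_lists_Suc:
  assumes "lo < n"
  shows "weak_lists lo n (Suc m) = Cons lo ` weak_lists lo n m \<union> weak_lists (Suc lo) n (Suc m)"
proof (intro equalityI subsetI)
  fix xs assume xs: "xs \<in> weak_lists lo n (Suc m)"
  then obtain y ys where "xs = y # ys" by (cases xs) (auto simp: weak_lists_def)
  with xs show "xs \<in> Cons lo ` weak_lists lo n m \<union> weak_lists (Suc lo) n (Suc m)"
    by (cases "y = lo") (force simp: weak_lists_def Suc_le_eq)+
qed (use assms in \<open>force simp: weak_lists_def\<close>)

lemma complete_sym_Suc:
  assumes "lo < n"
  shows "complete_sym L lo n (Suc m) = L lo * complete_sym L lo n m + complete_sym L (Suc lo) n (Suc m)"
proof -
  have "complete_sym L lo n (Suc m) =
      (\<Sum>xs\<in>Cons lo ` weak_lists lo n m. prod_list (map L xs)) + complete_sym L (Suc lo) n (Suc m)"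
    unfolding complete_sym_def weak_lists_Suc[OF assms]
    by (intro sum.union_disjoint finite_imageI finite_weak_lists) (auto simp: weak_lists_def)
  also have "(\<Sum>xs\<in>Cons lo ` weak_lists lo n m. prod_list (map L xs)) = L lo * complete_sym L lo n m"
    by (subst sum.reindex) (auto simp: complete_sym_def sum_distrib_left)
  finally show ?thesis .
qed

lemma elem_sym_0 [simp]: "finite S \<Longrightarrow> elem_sym L S 0 = 1"
proof -
  assume "finite S"
  then have "{T. T \<subseteq> S \<and> card T = 0} = {{}}" by (auto dest: finite_subset)
  then show ?thesis by (simp add: elem_sym_def)
qed

lemma elem_sym_empty [simp]: "elem_sym L {} (Suc m) = 0"
proof -
  have "{T. T \<subseteq> {} \<and> card T = Suc m} = {}" by auto
  then show ?thesis unfolding elem_sym_def by (metis sum.empty)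
qed

lemma elem_sym_insert:
  assumes "finite S" "a \<notin> S"
  shows "elem_sym L (insert a S) (Suc m) = elem_sym L S (Suc m) + L a * elem_sym L S m"
proof -
  let ?sub = "\<lambda>m. {T. T \<subseteq> S \<and> card T = m}"
  have fin: "finite T" if "T \<subseteq> S" for T using assms that finite_subset by blast
  have split: "{T. T \<subseteq> insert a S \<and> card T = Suc m} = ?sub (Suc m) \<union> insert a ` ?sub m"
  proof (intro equalityI subsetI)
    fix T assume T: "T \<in> {T. T \<subseteq> insert a S \<and> card T = Suc m}"
    show "T \<in> ?sub (Suc m) \<union> insert a ` ?sub m"
    proof (cases "a \<in> T")
      case True
      then have "T = insert a (T - {a})" "T - {a} \<in> ?sub m"
        using T fin[of "T - {a}"] by auto
      then show ?thesis by blast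
    qed (use T in auto)
  qed (use assms in \<open>auto simp: card_insert_if fin\<close>)
  have "elem_sym L (insert a S) (Suc m) = elem_sym L S (Suc m) + (\<Sum>T\<in>insert a ` ?sub m. prod L T)"
    unfolding elem_sym_def split using assms by (intro sum.union_disjoint) auto
  also have "(\<Sum>T\<in>insert a ` ?sub m. prod L T) = L a * elem_sym L S m"
  proof (subst sum.reindex)
    show "inj_on (insert a) (?sub m)"
      by (rule inj_onI) (metis Diff_insert_absorb assms(2) mem_Collect_eq subsetD)
    have "prod L (insert a T) = L a * prod L T" if "T \<subseteq> S" for T
    proof -
      have "a \<notin> T" using that assms by blast
      then show ?thesis using fin[OF that] by simp
    qed
    then show "sum (prod L \<circ> insert a) (?sub m) = L a * elem_sym L S m"
      by (simp add: elem_sym_def sum_distrib_left)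
  qed
  finally show ?thesis .
qed

lemma elem_sym_conv_strict_lists:
  "elem_sym L {lo..<n} m = (\<Sum>ys\<in>strict_lists lo n m. prod_list (map L ys))"
proof -
  have fin: "finite T" if "T \<subseteq> {lo..<n}" for T using that finite_subset by blast
  have "bij_betw set (strict_lists lo n m) {T. T \<subseteq> {lo..<n} \<and> card T = m}"
  proof (rule bij_betw_byWitness[where f' = sorted_list_of_set])
    show "\<forall>ys\<in>strict_lists lo n m. sorted_list_of_set (set ys) = ys"
      by (auto simp: strict_lists_def strict_sorted_iff sorted_list_of_set.idem_if_sorted_distinct)
  qed (auto simp: strict_lists_def strict_sorted_iff distinct_card fin subset_iff)
  then show ?thesis
    unfolding elem_sym_def
    by (subst sum.reindex_bij_betw[symmetric])
      (auto simp: strict_lists_def strict_sorted_iff prod.distinct_set_conv_list)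
qed

lemma prod_add_mult_eq_elem_sym:
  assumes "finite U"
  shows "(\<Prod>j\<in>U. y + z * L j) = (\<Sum>b\<le>card U. elem_sym L U b * z ^ b * y ^ (card U - b))"
proof -
  have "(\<Prod>j\<in>U. y + z * L j) = (\<Sum>X\<in>Pow U. (\<Prod>j\<in>X. z * L j) * (\<Prod>j\<in>U - X. y))"
    using prod_add[OF assms, of "\<lambda>j. z * L j" "\<lambda>_. y"] by (simp add: add.commute)
  also have "\<dots> = (\<Sum>X\<in>Pow U. prod L X * z ^ card X * y ^ (card U - card X))"
  proof (rule sum.cong[OF refl])
    fix X assume "X \<in> Pow U"
    with assms have "finite X" "card (U - X) = card U - card X"
      by (auto simp: card_Diff_subset finite_subset)
    then show "(\<Prod>j\<in>X. z * L j) * (\<Prod>j\<in>U - X. y) = prod L X * z ^ card X * y ^ (card U - card X)"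
      by (simp add: prod.distrib mult.commute)
  qed
  also have "\<dots> = (\<Sum>b\<le>card U. \<Sum>X | X \<in> Pow U \<and> card X = b. prod L X * z ^ card X * y ^ (card U - card X))"
    by (rule sum.group[symmetric]) (use assms card_mono in auto)
  also have "\<dots> = (\<Sum>b\<le>card U. elem_sym L U b * z ^ b * y ^ (card U - b))"
    unfolding elem_sym_def sum_distrib_right by (intro sum.cong) auto
  finally show ?thesis .
qed

lemma elem_sym_remove:
  assumes "finite S" "i \<in> S"
  shows "elem_sym L (S - {i}) b = (\<Sum>d\<le>b. (- L i) ^ (b - d) * elem_sym L S d)"
proof (induction b)
  case (Suc b)
  have "elem_sym L S (Suc b) = elem_sym L (S - {i}) (Suc b) + L i * elem_sym L (S - {i}) b"
    using elem_sym_insert[of "S - {i}" i L b] assms by (simp add: insert_absorb)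
  then have "elem_sym L (S - {i}) (Suc b) =
      elem_sym L S (Suc b) + (\<Sum>d\<le>b. (- L i) ^ (Suc b - d) * elem_sym L S d)"
    by (simp add: Suc sum_distrib_left Suc_diff_le sum_negf algebra_simps)
  then show ?case by simp
qed (use assms in simp)

definition divided_power_sum :: "(nat \<Rightarrow> 'a::field) \<Rightarrow> nat set \<Rightarrow> nat \<Rightarrow> 'a" where
  "divided_power_sum L S m = (\<Sum>i\<in>S. L i ^ m / (\<Prod>j\<in>S - {i}. L i - L j))"

lemma divided_power_sum_Suc:
  assumes "finite X" "a \<in> X" "inj_on L X"
  shows "divided_power_sum L X (Suc m) = L a * divided_power_sum L X m + divided_power_sum L (X - {a}) m"
proof -
  let ?D = "\<lambda>Y i. \<Prod>j\<in>Y - {i}. L i - L j"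
  have cancel: "(L i - L a) * L i ^ m / ?D X i = L i ^ m / ?D (X - {a}) i" if "i \<in> X - {a}" for i
  proof -
    have "X - {i} = insert a (X - {a} - {i})" using that assms(2) by auto
    then have "?D X i = (L i - L a) * ?D (X - {a}) i" using assms(1) by simp
    moreover have "L i - L a \<noteq> 0" using that assms(2,3) by (auto dest: inj_onD)
    ultimately show ?thesis by simp
  qed
  have "divided_power_sum L X (Suc m) =
      L a * divided_power_sum L X m + (\<Sum>i\<in>X. (L i - L a) * L i ^ m / ?D X i)"
    unfolding divided_power_sum_def sum_distrib_left sum.distrib[symmetric]
    by (intro sum.cong refl) (simp add: add_divide_distrib[symmetric] algebra_simps)
  also have "(\<Sum>i\<in>X. (L i - L a) * L i ^ m / ?D X i) = (\<Sum>i\<in>X - {a}. (L i - L a) * L i ^ m / ?D X i)"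
    by (rule sum.mono_neutral_right) (use assms in auto)
  also have "\<dots> = divided_power_sum L (X - {a}) m"
    unfolding divided_power_sum_def by (rule sum.cong[OF refl cancel])
  finally show ?thesis .
qed

lemma divided_power_sum_below_card:
  assumes "finite X" "inj_on L X" "card X = Suc s" "m \<le> s"
  shows "divided_power_sum L X m = (if m = s then 1 else 0)"
  using assms
proof (induction s arbitrary: X m)
  case 0
  then obtain a where "X = {a}" by (metis One_nat_def card_1_singletonE)
  with 0 show ?case by (simp add: divided_power_sum_def)
next
  case (Suc s)
  obtain a Y where Y: "X = insert a Y" "a \<notin> Y" "card Y = Suc s"
    using card_eq_SucD[OF Suc.prems(3)] by blast
  obtain b where "b \<in> Y" using card_eq_SucD[OF Y(3)] by blast
  with Y have ab: "a \<in> X" "b \<in> X" "a \<noteq> b" by auto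
  have IH: "divided_power_sum L (X - {c}) m' = (if m' = s then 1 else 0)" if "c \<in> X" "m' \<le> s" for c m'
    using Suc.IH[of "X - {c}" m'] Suc.prems that by (simp add: inj_on_diff)
  have zero: "divided_power_sum L X m' = 0" if "m' \<le> s" for m'
  proof -
    (* the recursion of divided_power_sum_Suc, taken at two different points *)
    have "L a * divided_power_sum L X m' + divided_power_sum L (X - {a}) m' =
        L b * divided_power_sum L X m' + divided_power_sum L (X - {b}) m'"
      using divided_power_sum_Suc[OF Suc.prems(1) ab(1) Suc.prems(2)]
        divided_power_sum_Suc[OF Suc.prems(1) ab(2) Suc.prems(2)] by simp
    then have "(L a - L b) * divided_power_sum L X m' = 0"
      using IH[OF ab(1) that] IH[OF ab(2) that] by (simp add: algebra_simps)
    moreover have "L a \<noteq> L b" using ab Suc.prems(2) by (auto dest: inj_onD)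
    ultimately show ?thesis by simp
  qed
  show ?case
  proof (cases "m = Suc s")
    case True
    then show ?thesis
      using divided_power_sum_Suc[of X a L s] Suc.prems ab zero[of s] IH[of a s] by simp
  qed (use Suc.prems zero in simp)
qed

lemma divided_power_sum_eq_complete_sym:
  assumes "lo < n" "inj_on L {lo..<n}"
  shows "divided_power_sum L {lo..<n} (m + (n - Suc lo)) = complete_sym L lo n m"
  using assms
proof (induction "n - lo" arbitrary: lo m)
  case (Suc d)
  have tail: "divided_power_sum L {Suc lo..<n} (m + (n - Suc lo)) = complete_sym L (Suc lo) n (Suc m)"
    for m
  proof (cases "Suc lo < n")
    case True
    have "inj_on L {Suc lo..<n}" by (rule inj_on_subset[OF Suc.prems(2)]) auto
    have "divided_power_sum L {Suc lo..<n} (Suc m + (n - Suc (Suc lo))) =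
        complete_sym L (Suc lo) n (Suc m)"
      using Suc.hyps(1)[of "Suc lo" "Suc m"] Suc.hyps(2) True \<open>inj_on L {Suc lo..<n}\<close> by simp
    moreover have "m + (n - Suc lo) = Suc m + (n - Suc (Suc lo))" using True by simp
    ultimately show ?thesis by metis
  qed (simp add: divided_power_sum_def complete_sym_empty)
  note prems = Suc.prems
  show ?case
  proof (induction m)
    case 0
    show ?case using divided_power_sum_below_card[of "{lo..<n}" L "n - Suc lo"] prems by simp
  next
    case (Suc m)
    have "{lo..<n} - {lo} = {Suc lo..<n}" by auto
    then have "divided_power_sum L {lo..<n} (Suc m + (n - Suc lo)) =
        L lo * divided_power_sum L {lo..<n} (m + (n - Suc lo)) +
        divided_power_sum L {Suc lo..<n} (m + (n - Suc lo))"
      using divided_power_sum_Suc[of "{lo..<n}" lo L] prems by simp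
    then show ?case using Suc.IH tail complete_sym_Suc[of lo n L m] prems by simp
  qed
qed simp

lemma divided_power_sum_lessThan:
  assumes "inj_on L {..<n}" "d < n"
  shows "divided_power_sum L {..<n} (k + (n - Suc d)) = (if d \<le> k then complete_sym L 0 n (k - d) else 0)"
proof (cases "d \<le> k")
  case True
  then have "k + (n - Suc d) = (k - d) + (n - Suc 0)" using assms(2) by simp
  then show ?thesis
    using divided_power_sum_eq_complete_sym[of 0 n L "k - d"] assms True by (simp add: atLeast0LessThan)
next
  case False
  then show ?thesis using divided_power_sum_below_card[of "{..<n}" L "n - 1" "k + (n - Suc d)"] assms by simp
qed

(* hook_sum L lo n a b is the Schur function s_{(a+1,1^b)} of L lo, ..., L (n - 1), with its
   tableaux grouped by the corner entry j. *)
definition hook_sum :: "(nat \<Rightarrow> 'a::comm_ring_1) \<Rightarrow> nat \<Rightarrow> nat \<Rightarrow> nat \<Rightarrow> nat \<Rightarrow> 'a" where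
  "hook_sum L lo n a b = (\<Sum>j\<in>{lo..<n}. L j * complete_sym L j n a * elem_sym L {Suc j..<n} b)"

lemma hook_sum_Suc:
  "lo < n \<Longrightarrow> hook_sum L lo n a b =
     L lo * complete_sym L lo n a * elem_sym L {Suc lo..<n} b + hook_sum L (Suc lo) n a b"
  unfolding hook_sum_def by (simp add: sum.atLeast_Suc_lessThan)

lemma hook_sum_empty: "n \<le> lo \<Longrightarrow> hook_sum L lo n a b = 0"
  unfolding hook_sum_def by simp

lemma elem_sym_atLeastLessThan_Suc:
  assumes "lo < n"
  shows "elem_sym L {lo..<n} (Suc b) = L lo * elem_sym L {Suc lo..<n} b + elem_sym L {Suc lo..<n} (Suc b)"
proof -
  have "{lo..<n} = insert lo {Suc lo..<n}" using assms by auto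
  then show ?thesis using elem_sym_insert[of "{Suc lo..<n}" lo L b] by (simp add: add.commute)
qed

lemma hook_sum_0_eq_complete_sym: "lo \<le> n \<Longrightarrow> hook_sum L lo n a 0 = complete_sym L lo n (Suc a)"
proof (induction "n - lo" arbitrary: lo)
  case (Suc d)
  then show ?case
    using hook_sum_Suc[of lo n L a 0] complete_sym_Suc[of lo n L a] Suc.hyps(1)[of "Suc lo"] by simp
qed (simp add: hook_sum_empty complete_sym_empty)

lemma elem_sym_mult_complete_sym:
  "lo \<le> n \<Longrightarrow> elem_sym L {lo..<n} (Suc b) * complete_sym L lo n a =
     hook_sum L lo n a b + (if a = 0 then 0 else hook_sum L lo n (a - 1) (Suc b))"
proof (induction "n - lo" arbitrary: lo)
  case 0
  then show ?case by (simp add: hook_sum_empty)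
next
  case (Suc d)
  then have lo: "lo < n" by simp
  have IH: "elem_sym L {Suc lo..<n} (Suc b) * complete_sym L (Suc lo) n a =
      hook_sum L (Suc lo) n a b + (if a = 0 then 0 else hook_sum L (Suc lo) n (a - 1) (Suc b))"
    using Suc by simp
  show ?case
  proof (cases a)
    case 0
    then show ?thesis
      using IH elem_sym_atLeastLessThan_Suc[OF lo, of L b] hook_sum_Suc[OF lo, of L 0 b] by simp
  next
    case (Suc a')
    then show ?thesis
      using IH elem_sym_atLeastLessThan_Suc[OF lo, of L b] hook_sum_Suc[OF lo, of L a b]
        hook_sum_Suc[OF lo, of L a' "Suc b"] complete_sym_Suc[OF lo, of L a']
      by (simp add: algebra_simps)
  qed
qed

lemma alternating_elem_complete_sum:
  assumes "0 < k"
  shows "(\<Sum>d\<le>b. (-1) ^ (b - d) * elem_sym L {..<n} d * (if d \<le> k then complete_sym L 0 n (k - d) else 0)) =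
    (if b < k then hook_sum L 0 n (k - Suc b) b else 0)"
    (is "?S b = _")
proof (induction b)
  case 0
  then show ?case using hook_sum_0_eq_complete_sym[of 0 n L "k - 1"] assms by simp
next
  case (Suc b)
  have pieri: "elem_sym L {..<n} (Suc b) * complete_sym L 0 n a =
      hook_sum L 0 n a b + (if a = 0 then 0 else hook_sum L 0 n (a - 1) (Suc b))" for a
    using elem_sym_mult_complete_sym[of 0 n L b a] by (simp add: atLeast0LessThan)
  have step: "?S (Suc b) = - ?S b +
      elem_sym L {..<n} (Suc b) * (if Suc b \<le> k then complete_sym L 0 n (k - Suc b) else 0)"
    by (auto simp: sum_negf[symmetric] Suc_diff_le intro!: sum.cong)
  consider "Suc b < k" | "Suc b = k" | "k < Suc b" by linarith
  then show ?case
  proof cases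
    case 1
    then show ?thesis using step Suc pieri[of "k - Suc b"] by (simp add: Suc_diff_Suc)
  next
    case 2
    then have k: "k = Suc b" ..
    show ?thesis using step Suc pieri[of 0] unfolding k by simp
  qed (use step Suc in simp)
qed

lemma mem_young_cells_hook:
  "(r, c) \<in> young_cells (hook (Suc a) b) \<longleftrightarrow> r = 0 \<and> c \<le> a \<or> 0 < r \<and> r \<le> b \<and> c = 0"
  unfolding young_cells_def hook_def by (cases r) auto

(* A hook tableau is encoded by its corner entry, the rest of its first row and the rest of its
   first column. *)
definition hook_data :: "nat \<Rightarrow> nat \<Rightarrow> nat \<Rightarrow> (nat \<times> nat list \<times> nat list) set" where
  "hook_data n a b = (SIGMA j:{..<n}. weak_lists j n a \<times> strict_lists (Suc j) n b)"

definition hook_tableau :: "nat \<Rightarrow> nat \<Rightarrow> nat \<times> nat list \<times> nat list \<Rightarrow> nat \<times> nat \<Rightarrow> nat" where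
  "hook_tableau a b = (\<lambda>(j, xs, ys) (r, c).
     if (r, c) \<in> young_cells (hook (Suc a) b) then if r = 0 then (j # xs) ! c else (j # ys) ! r else 0)"

definition hook_tableau_data :: "nat \<Rightarrow> nat \<Rightarrow> (nat \<times> nat \<Rightarrow> nat) \<Rightarrow> nat \<times> nat list \<times> nat list" where
  "hook_tableau_data a b T = (T (0, 0), map (\<lambda>c. T (0, Suc c)) [0..<a], map (\<lambda>r. T (Suc r, 0)) [0..<b])"

lemma hook_tableau_in_ssyt:
  assumes "p \<in> hook_data n a b"
  shows "hook_tableau a b p \<in> ssyt n (hook (Suc a) b)"
proof -
  obtain j xs ys where p: "p = (j, xs, ys)" "j < n"
    and "xs \<in> weak_lists j n a" "ys \<in> strict_lists (Suc j) n b"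
    using assms by (auto simp: hook_data_def)
  then have xs: "length xs = a" "sorted (j # xs)" and ys: "length ys = b" "sorted_wrt (<) (j # ys)"
    and sub: "set (j # xs) \<subseteq> {..<n}" "set (j # ys) \<subseteq> {..<n}"
    by (auto simp: weak_lists_def strict_lists_def subset_iff Suc_le_eq)
  have bound_row: "(j # xs) ! c < n" if "c \<le> a" for c
    using sub(1) nth_mem[of c "j # xs"] that xs(1) by (auto simp del: nth_Cons_Suc)
  have bound_col: "(j # ys) ! r < n" if "r \<le> b" for r
    using sub(2) nth_mem[of r "j # ys"] that ys(1) by (auto simp del: nth_Cons_Suc)
  let ?T = "hook_tableau a b p"
  have row: "?T (0, c) = (j # xs) ! c" if "c \<le> a" for c
    using that by (simp add: hook_tableau_def p mem_young_cells_hook)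
  have col: "?T (r, 0) = (j # ys) ! r" if "r \<le> b" for r
    using that by (cases r) (simp_all add: hook_tableau_def p mem_young_cells_hook)
  show ?thesis
    unfolding ssyt_def
  proof (intro CollectI conjI allI impI ballI)
    fix x assume "x \<in> young_cells (hook (Suc a) b)"
    then obtain r c where "x = (r, c)" "r = 0 \<and> c \<le> a \<or> 0 < r \<and> r \<le> b \<and> c = 0"
      by (cases x) (auto simp: mem_young_cells_hook)
    then show "?T x < n" using row col bound_row bound_col by (auto simp del: nth_Cons_Suc nth_Cons_pos)
  next
    fix x assume "x \<notin> young_cells (hook (Suc a) b)"
    then show "?T x = 0" by (cases x) (simp add: hook_tableau_def p)
  next
    fix r c assume "(r, Suc c) \<in> young_cells (hook (Suc a) b)"
    then show "?T (r, c) \<le> ?T (r, Suc c)"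
      using row sorted_nth_mono[OF xs(2), of c "Suc c"] xs(1) by (simp add: mem_young_cells_hook)
  next
    fix r c assume "(Suc r, c) \<in> young_cells (hook (Suc a) b)"
    then show "?T (r, c) < ?T (Suc r, c)"
      using col sorted_wrt_nth_less[OF ys(2), of r "Suc r"] ys(1) by (simp add: mem_young_cells_hook)
  qed
qed

lemma hook_tableau_data_in_hook_data:
  assumes "T \<in> ssyt n (hook (Suc a) b)"
  shows "hook_tableau_data a b T \<in> hook_data n a b"
proof -
  let ?C = "young_cells (hook (Suc a) b)"
  have bound: "T x < n" if "x \<in> ?C" for x using assms that by (auto simp: ssyt_def)
  have "sorted (map (\<lambda>c. T (0, c)) [0..<Suc a])"
    unfolding sorted_iff_nth_Suc using assms by (auto simp: ssyt_def mem_young_cells_hook simp del: upt_Suc)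
  then have row: "sorted (T (0, 0) # map (\<lambda>c. T (0, Suc c)) [0..<a])"
    by (simp add: map_upt_Suc del: upt_Suc)
  have "sorted_wrt (<) (map (\<lambda>r. T (r, 0)) [0..<Suc b])"
    unfolding sorted_wrt_iff_nth_Suc_transp[OF transp_on_less]
    using assms by (auto simp: ssyt_def mem_young_cells_hook simp del: upt_Suc)
  then have col: "sorted_wrt (<) (T (0, 0) # map (\<lambda>r. T (Suc r, 0)) [0..<b])"
    by (simp add: map_upt_Suc del: upt_Suc)
  show ?thesis
    using row col bound[of "(0, _)"] bound[of "(Suc _, 0)"]
    by (auto simp: hook_tableau_data_def hook_data_def weak_lists_def strict_lists_def
        mem_young_cells_hook Suc_le_eq)
qed

lemma hook_tableau_data_hook_tableau:
  assumes "p \<in> hook_data n a b"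
  shows "hook_tableau_data a b (hook_tableau a b p) = p"
proof -
  obtain j xs ys where p: "p = (j, xs, ys)" "length xs = a" "length ys = b"
    using assms by (auto simp: hook_data_def weak_lists_def strict_lists_def)
  have "map (\<lambda>c. hook_tableau a b p (0, Suc c)) [0..<a] = xs"
    by (rule nth_equalityI) (auto simp: p hook_tableau_def mem_young_cells_hook)
  moreover have "map (\<lambda>r. hook_tableau a b p (Suc r, 0)) [0..<b] = ys"
    by (rule nth_equalityI) (auto simp: p hook_tableau_def mem_young_cells_hook)
  ultimately show ?thesis by (simp add: hook_tableau_data_def hook_tableau_def p mem_young_cells_hook)
qed

lemma hook_tableau_hook_tableau_data:
  assumes "T \<in> ssyt n (hook (Suc a) b)"
  shows "hook_tableau a b (hook_tableau_data a b T) = T"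
proof (rule ext, clarify)
  fix r c
  show "hook_tableau a b (hook_tableau_data a b T) (r, c) = T (r, c)"
  proof (cases "(r, c) \<in> young_cells (hook (Suc a) b)")
    case True
    then show ?thesis
      by (cases r; cases c) (auto simp: hook_tableau_def hook_tableau_data_def mem_young_cells_hook)
  next
    case False
    then show ?thesis using assms by (simp add: hook_tableau_def hook_tableau_data_def ssyt_def)
  qed
qed

lemma prod_young_cells_hook:
  "(\<Prod>x\<in>young_cells (hook (Suc a) b). L (T x)) =
    (case hook_tableau_data a b T of (j, xs, ys) \<Rightarrow> L j * prod_list (map L xs) * prod_list (map L ys))"
proof -
  have cells: "young_cells (hook (Suc a) b) = (\<lambda>c. (0, c)) ` {..<Suc a} \<union> (\<lambda>r. (Suc r, 0)) ` {..<b}"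
  proof (rule set_eqI)
    fix x :: "nat \<times> nat"
    obtain r c where "x = (r, c)" by fastforce
    then show "x \<in> young_cells (hook (Suc a) b) \<longleftrightarrow> x \<in> (\<lambda>c. (0, c)) ` {..<Suc a} \<union> (\<lambda>r. (Suc r, 0)) ` {..<b}"
      by (cases r) (auto simp: mem_young_cells_hook)
  qed
  have "(\<Prod>x\<in>young_cells (hook (Suc a) b). L (T x)) =
      (\<Prod>x\<in>(\<lambda>c. (0, c)) ` {..<Suc a}. L (T x)) * (\<Prod>x\<in>(\<lambda>r. (Suc r, 0)) ` {..<b}. L (T x))"
    unfolding cells by (rule prod.union_disjoint) auto
  also have "\<dots> = L (T (0, 0)) * (\<Prod>c<a. L (T (0, Suc c))) * (\<Prod>r<b. L (T (Suc r, 0)))"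
    by (simp add: prod.reindex inj_on_def prod.lessThan_Suc_shift del: prod.lessThan_Suc)
  finally show ?thesis
    by (simp add: hook_tableau_data_def prod.distinct_set_conv_list[symmetric] atLeast0LessThan)
qed

lemma hook_sum_eq_sum_hook_data:
  "hook_sum L 0 n a b = (\<Sum>(j, xs, ys)\<in>hook_data n a b. L j * prod_list (map L xs) * prod_list (map L ys))"
proof -
  have corner: "L j * complete_sym L j n a * elem_sym L {Suc j..<n} b =
      (\<Sum>(xs, ys)\<in>weak_lists j n a \<times> strict_lists (Suc j) n b.
        L j * prod_list (map L xs) * prod_list (map L ys))"
    for j
  proof -
    have "L j * complete_sym L j n a * elem_sym L {Suc j..<n} b =
        (\<Sum>xs\<in>weak_lists j n a. L j * prod_list (map L xs)) *
        (\<Sum>ys\<in>strict_lists (Suc j) n b. prod_list (map L ys))"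
      by (simp add: complete_sym_def elem_sym_conv_strict_lists sum_distrib_left)
    then show ?thesis by (simp add: sum_product sum.cartesian_product)
  qed
  have "hook_sum L 0 n a b =
      (\<Sum>j<n. \<Sum>(xs, ys)\<in>weak_lists j n a \<times> strict_lists (Suc j) n b.
        L j * prod_list (map L xs) * prod_list (map L ys))"
    unfolding hook_sum_def corner atLeast0LessThan ..
  also have "\<dots> = (\<Sum>(j, xs, ys)\<in>hook_data n a b. L j * prod_list (map L xs) * prod_list (map L ys))"
    unfolding hook_data_def by (rule sum.Sigma) (auto simp: finite_weak_lists finite_strict_lists)
  finally show ?thesis .
qed

lemma schur_hook_eq_hook_sum: "schur n (hook (Suc a) b) L = hook_sum L 0 n a b"
  unfolding schur_def hook_sum_eq_sum_hook_data
  by (rule sum.reindex_bij_witness[where i = "hook_tableau a b" and j = "hook_tableau_data a b"])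
    (simp_all add: hook_tableau_hook_tableau_data hook_tableau_data_in_hook_data
      hook_tableau_data_hook_tableau hook_tableau_in_ssyt prod_young_cells_hook)

lemma Gnk_eq_sum_elem_sym:
  "Gnk n k q L = (\<Sum>b<n. (- inverse q) ^ b * q ^ (n - Suc b) *
     (\<Sum>i<n. L i ^ (k + (n - Suc b)) * elem_sym L ({..<n} - {i}) b / (\<Prod>j\<in>{..<n} - {i}. L i - L j)))"
proof -
  have summand: "L i ^ k * (\<Prod>j\<in>{..<n} - {i}. (q * L i - inverse q * L j) / (L i - L j)) =
      (\<Sum>b<n. (- inverse q) ^ b * q ^ (n - Suc b) *
        (L i ^ (k + (n - Suc b)) * elem_sym L ({..<n} - {i}) b / (\<Prod>j\<in>{..<n} - {i}. L i - L j)))"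
    if "i < n" for i
  proof -
    let ?U = "{..<n} - {i}"
    have card: "card ?U = n - 1" and le: "{..n - Suc 0} = {..<n}" using that by auto
    have "(\<Prod>j\<in>?U. q * L i - inverse q * L j) = (\<Prod>j\<in>?U. q * L i + - inverse q * L j)"
      by simp
    also have "\<dots> = (\<Sum>b<n. elem_sym L ?U b * (- inverse q) ^ b * (q * L i) ^ (n - Suc b))"
      using prod_add_mult_eq_elem_sym[of ?U "q * L i" "- inverse q" L] by (simp add: card le)
    finally have expand: "(\<Prod>j\<in>?U. q * L i - inverse q * L j) =
        (\<Sum>b<n. elem_sym L ?U b * (- inverse q) ^ b * (q * L i) ^ (n - Suc b))" .
    have "L i ^ k * (\<Prod>j\<in>?U. (q * L i - inverse q * L j) / (L i - L j)) =
        (\<Sum>b<n. L i ^ k * (elem_sym L ?U b * (- inverse q) ^ b * (q * L i) ^ (n - Suc b)) /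
          (\<Prod>j\<in>?U. L i - L j))"
      by (simp add: prod_dividef expand sum_distrib_left sum_divide_distrib)
    also have "\<dots> = (\<Sum>b<n. (- inverse q) ^ b * q ^ (n - Suc b) *
        (L i ^ (k + (n - Suc b)) * elem_sym L ?U b / (\<Prod>j\<in>?U. L i - L j)))"
      by (intro sum.cong refl) (unfold power_add, simp add: power_mult_distrib ac_simps)
    finally show ?thesis .
  qed
  have "Gnk n k q L = (\<Sum>i<n. \<Sum>b<n. (- inverse q) ^ b * q ^ (n - Suc b) *
        (L i ^ (k + (n - Suc b)) * elem_sym L ({..<n} - {i}) b / (\<Prod>j\<in>{..<n} - {i}. L i - L j)))"
    unfolding Gnk_def by (rule sum.cong) (simp_all add: summand)
  also have "\<dots> = (\<Sum>b<n. \<Sum>i<n. (- inverse q) ^ b * q ^ (n - Suc b) *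
        (L i ^ (k + (n - Suc b)) * elem_sym L ({..<n} - {i}) b / (\<Prod>j\<in>{..<n} - {i}. L i - L j)))"
    by (rule sum.swap)
  finally show ?thesis by (simp add: sum_distrib_left)
qed

lemma divided_elem_sym_sum_eq_Gamma:
  fixes L :: "nat \<Rightarrow> 'a::field"
  assumes "inj_on L {..<n}" "b < n" "0 < k"
  shows "(\<Sum>i<n. L i ^ (k + (n - Suc b)) * elem_sym L ({..<n} - {i}) b / (\<Prod>j\<in>{..<n} - {i}. L i - L j)) =
    Gamma n k (Suc b) L"
proof -
  have power: "L i ^ (k + (n - Suc b)) * ((- L i) ^ (b - d) * e) =
      (-1) ^ (b - d) * e * L i ^ (k + (n - Suc d))"
    if "d \<le> b" for i d e
  proof -
    have "k + (n - Suc d) = k + (n - Suc b) + (b - d)" using that assms(2) by simp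
    then show ?thesis by (simp add: power_add power_minus[of "L i"] ac_simps)
  qed
  have "(\<Sum>i<n. L i ^ (k + (n - Suc b)) * elem_sym L ({..<n} - {i}) b / (\<Prod>j\<in>{..<n} - {i}. L i - L j)) =
      (\<Sum>i<n. \<Sum>d\<le>b. (-1) ^ (b - d) * elem_sym L {..<n} d *
        (L i ^ (k + (n - Suc d)) / (\<Prod>j\<in>{..<n} - {i}. L i - L j)))"
  proof (rule sum.cong[OF refl])
    fix i assume i: "i \<in> {..<n}"
    have "L i ^ (k + (n - Suc b)) * elem_sym L ({..<n} - {i}) b =
        (\<Sum>d\<le>b. L i ^ (k + (n - Suc b)) * ((- L i) ^ (b - d) * elem_sym L {..<n} d))"
      unfolding elem_sym_remove[OF finite_lessThan i] sum_distrib_left ..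
    also have "\<dots> = (\<Sum>d\<le>b. (-1) ^ (b - d) * elem_sym L {..<n} d * L i ^ (k + (n - Suc d)))"
      by (rule sum.cong[OF refl]) (rule power, simp)
    finally have numerator: "L i ^ (k + (n - Suc b)) * elem_sym L ({..<n} - {i}) b =
        (\<Sum>d\<le>b. (-1) ^ (b - d) * elem_sym L {..<n} d * L i ^ (k + (n - Suc d)))" .
    show "L i ^ (k + (n - Suc b)) * elem_sym L ({..<n} - {i}) b / (\<Prod>j\<in>{..<n} - {i}. L i - L j) =
        (\<Sum>d\<le>b. (-1) ^ (b - d) * elem_sym L {..<n} d *
          (L i ^ (k + (n - Suc d)) / (\<Prod>j\<in>{..<n} - {i}. L i - L j)))"
      unfolding numerator by (simp add: sum_divide_distrib)
  qed
  also have "\<dots> =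
      (\<Sum>d\<le>b. (-1) ^ (b - d) * elem_sym L {..<n} d * divided_power_sum L {..<n} (k + (n - Suc d)))"
    by (subst sum.swap) (simp add: divided_power_sum_def sum_distrib_left)
  also have "\<dots> = (\<Sum>d\<le>b. (-1) ^ (b - d) * elem_sym L {..<n} d *
      (if d \<le> k then complete_sym L 0 n (k - d) else 0))"
    using assms(2) by (intro sum.cong refl) (subst divided_power_sum_lessThan[OF assms(1)]; simp)
  also have "\<dots> = (if b < k then hook_sum L 0 n (k - Suc b) b else 0)"
    by (rule alternating_elem_complete_sum[OF assms(3)])
  also have "\<dots> = Gamma n k (Suc b) L"
    using schur_hook_eq_hook_sum[of n "k - Suc b" b L] by (simp add: Gamma_def)
  finally show ?thesis .
qed

theorem corollary3p4:
  fixes q :: "'a::field_char_0" and L :: "nat \<Rightarrow> 'a" and n k :: nat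
  assumes "n \<ge> 2" and "k \<ge> 1" and "q \<noteq> 0" and "inj_on L {..<n}"
  shows "Gnk n k q L =
    (\<Sum>i=1..n. (-1) ^ (i - 1) * q powi (int n - 2 * int i + 1) * Gamma n k i L)"
proof -
  have coeff: "(- inverse q) ^ b * q ^ (n - Suc b) = (-1) ^ b * q powi (int n - 2 * int (Suc b) + 1)"
    if "b < n" for b
  proof -
    have "q powi (int n - 2 * int (Suc b) + 1) = q powi (int (n - Suc b) - int b)"
      by (rule arg_cong[where f = "power_int q"]) (use that in simp)
    also have "\<dots> = q ^ (n - Suc b) / q ^ b"
      using assms(3) by (simp add: power_int_diff)
    finally show ?thesis by (simp add: power_minus[of "inverse q"] power_inverse divide_inverse)
  qed
  have "Gnk n k q L = (\<Sum>b<n. (- inverse q) ^ b * q ^ (n - Suc b) * Gamma n k (Suc b) L)"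
    unfolding Gnk_eq_sum_elem_sym using divided_elem_sym_sum_eq_Gamma[OF assms(4)] assms(2)
    by (intro sum.cong refl) simp
  also have "\<dots> = (\<Sum>b<n. (-1) ^ b * q powi (int n - 2 * int (Suc b) + 1) * Gamma n k (Suc b) L)"
    by (intro sum.cong refl) (simp add: coeff)
  finally show ?thesis by (simp add: sum.atLeast1_atMost_eq)
qed

end
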